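(* Let \(A\) be a geometrically fast set of positive bumps with a fixed marking witnessing this. If \(s\neq t\) are points of \(I\) both having trivial history, then the orbits \(s\langle A\rangle\) and \(t\langle A\rangle\) are disjoint.
   Context: \(I=[0,1]\); homeomorphisms act on the right. A positive bump is an element of \(\operatorname{Homeo}_+(I)\) whose support \(\{t:ta\neq t\}\) is a single open interval \((x,y)\) on which \(ta>t\); \(x\), \(y\) are its left and right transition points. \(A\) is geometrically proper if no point is a left transition point of two distinct elements, nor a right transition point of two distinct elements. A marking assigns each \(a\in A\) a marker \(t\in\operatorname{supt}(a)\); for \(a\) with support \((x,y)\), \(\operatorname{src}(a)=(x,t)\), \(\operatorname{dest}(a)=[ta,y)\), \(\operatorname{dest}(a^{-1})=\operatorname{src}(a)\). \(A\) is geometrically fast if geometrically proper and the marking makes all these intervals pairwise disjoint. A point \(t\in I\) has trivial history if \(t\notin\operatorname{dest}(a)\) for every \(a\in A\cup A^{-1}\). \(s\langle A\rangle=\{sg: g\in\langle A\rangle\}\). *)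

theory Defs
  imports Complex_Main
begin

text \<open>Elements of Homeo_+(I), I = [0,1], are represented by functions real => real;
only their values on I matter. Action is on the right: t.a is written a t,
so t.(g h) = h (g t).\<close>

definition unitI :: "real set" where "unitI = {0..1}"

definition homeo_plus :: "(real \<Rightarrow> real) \<Rightarrow> bool" where
  "homeo_plus f \<longleftrightarrow> bij_betw f unitI unitI \<and> continuous_on unitI f \<and> strict_mono_on unitI f"

definition supt :: "(real \<Rightarrow> real) \<Rightarrow> real set" where
  "supt a = {t \<in> unitI. a t \<noteq> t}"

definition positive_bump :: "(real \<Rightarrow> real) \<Rightarrow> bool" where
  "positive_bump a \<longleftrightarrow> homeo_plus a \<and>
     (\<exists>x y. x < y \<and> supt a = {x<..<y} \<and> (\<forall>t\<in>{x<..<y}. a t > t))"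

definition left_tp :: "(real \<Rightarrow> real) \<Rightarrow> real" where "left_tp a = Inf (supt a)"
definition right_tp :: "(real \<Rightarrow> real) \<Rightarrow> real" where "right_tp a = Sup (supt a)"

definition geom_proper :: "(real \<Rightarrow> real) set \<Rightarrow> bool" where
  "geom_proper A \<longleftrightarrow> (\<forall>a\<in>A. \<forall>b\<in>A. a \<noteq> b \<longrightarrow> left_tp a \<noteq> left_tp b \<and> right_tp a \<noteq> right_tp b)"

definition marking :: "(real \<Rightarrow> real) set \<Rightarrow> ((real \<Rightarrow> real) \<Rightarrow> real) \<Rightarrow> bool" where
  "marking A m \<longleftrightarrow> (\<forall>a\<in>A. m a \<in> supt a)"

definition src :: "((real \<Rightarrow> real) \<Rightarrow> real) \<Rightarrow> (real \<Rightarrow> real) \<Rightarrow> real set" where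
  "src m a = {left_tp a<..<m a}"

definition dest :: "((real \<Rightarrow> real) \<Rightarrow> real) \<Rightarrow> (real \<Rightarrow> real) \<Rightarrow> real set" where
  "dest m a = {a (m a)..<right_tp a}"

text \<open>dest(a^-1) = src(a), so the family of all intervals is {src a, dest a | a in A}.\<close>
definition geom_fast :: "(real \<Rightarrow> real) set \<Rightarrow> ((real \<Rightarrow> real) \<Rightarrow> real) \<Rightarrow> bool" where
  "geom_fast A m \<longleftrightarrow> geom_proper A \<and> marking A m \<and>
     (\<forall>a\<in>A. \<forall>b\<in>A. src m a \<inter> dest m b = {} \<and>
        (a \<noteq> b \<longrightarrow> src m a \<inter> src m b = {} \<and> dest m a \<inter> dest m b = {}))"

text \<open>Trivial history: t not in dest(a) for a in A \<union> A^-1; since dest(a^-1) = src(a),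
this says t is in no dest(a) and no src(a) for a in A.\<close>
definition trivial_history :: "(real \<Rightarrow> real) set \<Rightarrow> ((real \<Rightarrow> real) \<Rightarrow> real) \<Rightarrow> real \<Rightarrow> bool" where
  "trivial_history A m t \<longleftrightarrow> (\<forall>a\<in>A. t \<notin> dest m a \<and> t \<notin> src m a)"

inductive_set gen_group :: "(real \<Rightarrow> real) set \<Rightarrow> (real \<Rightarrow> real) set" for A where
  gen_id: "id \<in> gen_group A"
| gen_mul: "g \<in> gen_group A \<Longrightarrow> a \<in> A \<Longrightarrow> a \<circ> g \<in> gen_group A"
| gen_mul_inv: "g \<in> gen_group A \<Longrightarrow> a \<in> A \<Longrightarrow> the_inv_into unitI a \<circ> g \<in> gen_group A"

definition orbit :: "(real \<Rightarrow> real) set \<Rightarrow> real \<Rightarrow> real set" where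
  "orbit A s = {g s | g. g \<in> gen_group A}"

end

theory Submission
  imports Defs
begin

text \<open>A generator or its inverse moves a point of I either nowhere, or into its own destination
interval, or only because the point already lies in the destination of the opposite letter.
Call a point reachable from s if it arises from s by letters each of which lands in its own
destination. Reachable points are closed under all generators: in the third case above the
point was itself produced by the opposite letter, and the step just undoes it. Since the
destination intervals are pairwise disjoint, the letter that produced a reachable point other
than its starting point is read off from the point, so a backward induction shows that two
points of trivial history reach no common point.\<close>

lemma positive_bump_supt:
  assumes "positive_bump a"
  shows "left_tp a < right_tp a" and "supt a = {left_tp a<..<right_tp a}"
proof -
  obtain x y where xy: "x < y" "supt a = {x<..<y}"
    using assms unfolding positive_bump_def by auto
  then have "left_tp a = x" "right_tp a = y"
    by (auto simp: left_tp_def right_tp_def)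
  with xy show "left_tp a < right_tp a" "supt a = {left_tp a<..<right_tp a}"
    by auto
qed

lemma positive_bump_right_tp_unitI:
  assumes "positive_bump a"
  shows "right_tp a \<in> unitI"
proof -
  have "{left_tp a<..<right_tp a} \<subseteq> {0..1}"
    using positive_bump_supt(2)[OF assms] unfolding supt_def unitI_def by blast
  with positive_bump_supt(1)[OF assms] show ?thesis
    unfolding unitI_def greaterThanLessThan_subseteq_atLeastAtMost_iff by simp
qed

lemma positive_bump_bij_betw: "positive_bump a \<Longrightarrow> bij_betw a unitI unitI"
  and positive_bump_strict_mono_on: "positive_bump a \<Longrightarrow> strict_mono_on unitI a"
  unfolding positive_bump_def homeo_plus_def by auto

lemma positive_bump_inv_apply:
  assumes "positive_bump a" "x \<in> unitI"
  shows "the_inv_into unitI a x \<in> unitI" and "a (the_inv_into unitI a x) = x"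
  using positive_bump_bij_betw[OF assms(1)] assms(2)
  by (auto simp: bij_betw_def the_inv_into_into f_the_inv_into_f)

lemma positive_bump_trichotomy:
  assumes a: "positive_bump a" and marker: "m a \<in> supt a" and x: "x \<in> unitI"
  shows "a x = x \<or> a x \<in> dest m a \<or> x \<in> src m a"
proof (cases "x \<in> supt a")
  case False
  with x show ?thesis unfolding supt_def by auto
next
  case True
  note supt = positive_bump_supt(2)[OF a] and mono = positive_bump_strict_mono_on[OF a]
  have y: "right_tp a \<in> unitI" "right_tp a \<notin> supt a"
    using positive_bump_right_tp_unitI[OF a] supt by auto
  show ?thesis
  proof (cases "m a \<le> x")
    case True
    have "m a \<in> unitI" using marker unfolding supt_def by simp
    with True x mono have "a (m a) \<le> a x"
      by (metis order_le_less strict_mono_onD)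
    moreover have "a x < a (right_tp a)"
      using \<open>x \<in> supt a\<close> supt x y(1) mono by (auto intro: strict_mono_onD)
    moreover have "a (right_tp a) = right_tp a"
      using y unfolding supt_def by auto
    ultimately show ?thesis by (simp add: dest_def)
  next
    case False
    with \<open>x \<in> supt a\<close> supt show ?thesis by (simp add: src_def)
  qed
qed

lemma positive_bump_inv_trichotomy:
  assumes a: "positive_bump a" and marker: "m a \<in> supt a" and x: "x \<in> unitI"
  shows "the_inv_into unitI a x = x \<or> the_inv_into unitI a x \<in> src m a \<or> x \<in> dest m a"
  using positive_bump_trichotomy[where m = m, OF a marker positive_bump_inv_apply(1)[OF a x]]
  by (auto simp: positive_bump_inv_apply(2)[OF a x])

text \<open>The letter \<open>a\<^sup>b\<close> stands for \<open>a\<close> if \<open>b\<close> and for \<open>a\<^sup>-\<^sup>1\<close> otherwise;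
its destination uses \<open>dest(a\<^sup>-\<^sup>1) = src(a)\<close>.\<close>

definition signed_act :: "(real \<Rightarrow> real) \<Rightarrow> bool \<Rightarrow> real \<Rightarrow> real" where
  "signed_act a b = (if b then a else the_inv_into unitI a)"

definition signed_dest ::
    "((real \<Rightarrow> real) \<Rightarrow> real) \<Rightarrow> (real \<Rightarrow> real) \<Rightarrow> bool \<Rightarrow> real set" where
  "signed_dest m a b = (if b then dest m a else src m a)"

lemma trivial_history_iff_signed_dest:
  "trivial_history A m s \<longleftrightarrow> (\<forall>a\<in>A. \<forall>b. s \<notin> signed_dest m a b)"
  unfolding trivial_history_def signed_dest_def by auto

lemma signed_act_unitI:
  "positive_bump a \<Longrightarrow> x \<in> unitI \<Longrightarrow> signed_act a b x \<in> unitI"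
  using positive_bump_bij_betw positive_bump_inv_apply(1)
  by (auto simp: signed_act_def bij_betw_def)

lemma signed_act_cancel:
  assumes "positive_bump a" "x \<in> unitI"
  shows "signed_act a (\<not> b) (signed_act a b x) = x"
  using positive_bump_bij_betw[OF assms(1)] assms(2)
  by (auto simp: signed_act_def bij_betw_def the_inv_into_f_f f_the_inv_into_f)

lemma signed_act_trichotomy:
  assumes "positive_bump a" "m a \<in> supt a" "x \<in> unitI"
  shows "signed_act a b x = x \<or> signed_act a b x \<in> signed_dest m a b
    \<or> x \<in> signed_dest m a (\<not> b)"
  using positive_bump_trichotomy[where m = m, OF assms]
    positive_bump_inv_trichotomy[where m = m, OF assms]
  by (cases b) (auto simp: signed_act_def signed_dest_def)

lemma geom_fast_signed_dest_unique:
  assumes "geom_fast A m" "a \<in> A" "a' \<in> A"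
    and "x \<in> signed_dest m a b" "x \<in> signed_dest m a' b'"
  shows "a = a' \<and> b = b'"
  using assms unfolding geom_fast_def signed_dest_def
  by (cases b; cases b'; auto; blast)

inductive_set fast_reach ::
    "(real \<Rightarrow> real) set \<Rightarrow> ((real \<Rightarrow> real) \<Rightarrow> real) \<Rightarrow> real \<Rightarrow> real set"
  for A m s where
  fast_reach_start: "s \<in> fast_reach A m s"
| fast_reach_step: "x \<in> fast_reach A m s \<Longrightarrow> a \<in> A \<Longrightarrow>
    signed_act a b x \<in> signed_dest m a b \<Longrightarrow> signed_act a b x \<in> fast_reach A m s"

locale fast_bumps =
  fixes A :: "(real \<Rightarrow> real) set" and m :: "(real \<Rightarrow> real) \<Rightarrow> real"
  assumes bumps: "\<And>a. a \<in> A \<Longrightarrow> positive_bump a" and fast: "geom_fast A m"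
begin

lemma fast_reach_unitI: "x \<in> fast_reach A m s \<Longrightarrow> s \<in> unitI \<Longrightarrow> x \<in> unitI"
  by (induction rule: fast_reach.induct) (auto intro: signed_act_unitI bumps)

lemma fast_reach_last_letter:
  assumes "x \<in> fast_reach A m s" "x \<in> signed_dest m a b" "a \<in> A" "trivial_history A m s"
  obtains z where "z \<in> fast_reach A m s" "x = signed_act a b z"
proof -
  have "x \<noteq> s" using assms(2-4) by (auto simp: trivial_history_iff_signed_dest)
  with assms(1) obtain z a' b' where "z \<in> fast_reach A m s" "a' \<in> A" "x = signed_act a' b' z"
      "x \<in> signed_dest m a' b'"
    by (cases rule: fast_reach.cases) auto
  with geom_fast_signed_dest_unique[OF fast assms(3) _ assms(2)] that show thesis by blast
qed

lemma fast_reach_closed: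
  assumes s: "s \<in> unitI" "trivial_history A m s"
    and x: "x \<in> fast_reach A m s" and a: "a \<in> A"
  shows "signed_act a b x \<in> fast_reach A m s"
proof -
  have x_unit: "x \<in> unitI" using fast_reach_unitI[OF x s(1)] .
  have "m a \<in> supt a" using fast a unfolding geom_fast_def marking_def by auto
  then consider "signed_act a b x = x" | "signed_act a b x \<in> signed_dest m a b"
    | "x \<in> signed_dest m a (\<not> b)"
    using signed_act_trichotomy[OF bumps[OF a] _ x_unit] by blast
  then show ?thesis
  proof cases
    case 3
    then obtain z where z: "z \<in> fast_reach A m s" "x = signed_act a (\<not> b) z"
      using fast_reach_last_letter[OF x _ a s(2)] by blast
    have "signed_act a b x = z"
      using signed_act_cancel[OF bumps[OF a] fast_reach_unitI[OF z(1) s(1)], of "\<not> b"] z(2)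
      by simp
    with z(1) show ?thesis by simp
  qed (use x a in \<open>auto intro: fast_reach_step\<close>)
qed

lemma orbit_subset_fast_reach:
  assumes "s \<in> unitI" "trivial_history A m s"
  shows "orbit A s \<subseteq> fast_reach A m s"
proof -
  have "g s \<in> fast_reach A m s" if "g \<in> gen_group A" for g
    using that
  proof (induction rule: gen_group.induct)
    case gen_id
    show ?case by (simp add: fast_reach_start)
  next
    case (gen_mul g a)
    show ?case
      using fast_reach_closed[OF assms gen_mul.IH gen_mul.hyps(2), of True]
      by (simp add: signed_act_def)
  next
    case (gen_mul_inv g a)
    show ?case
      using fast_reach_closed[OF assms gen_mul_inv.IH gen_mul_inv.hyps(2), of False]
      by (simp add: signed_act_def)
  qed
  then show ?thesis unfolding orbit_def by blast
qed

lemma fast_reach_common_point: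
  assumes s: "s \<in> unitI" "trivial_history A m s" and t: "t \<in> unitI" "trivial_history A m t"
    and "x \<in> fast_reach A m s" "x \<in> fast_reach A m t"
  shows "s = t"
  using assms(5,6)
proof (induction rule: fast_reach.induct)
  case fast_reach_start
  then show ?case
    using s(2) by (cases rule: fast_reach.cases) (auto simp: trivial_history_iff_signed_dest)
next
  case (fast_reach_step z a b)
  obtain z' where z': "z' \<in> fast_reach A m t" "signed_act a b z = signed_act a b z'"
    using fast_reach_last_letter[OF fast_reach_step(5,3,2) t(2)] by metis
  have "z = z'"
    using signed_act_cancel[OF bumps[OF fast_reach_step(2)], of _ b] z'(2)
      fast_reach_unitI[OF fast_reach_step(1) s(1)] fast_reach_unitI[OF z'(1) t(1)]
    by metis
  with fast_reach_step.IH z'(1) show ?case by simp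
qed

end

theorem lemma5p6:
  assumes "\<forall>a\<in>A. positive_bump a"
    and "geom_fast A m"
    and "s \<in> unitI" and "t \<in> unitI" and "s \<noteq> t"
    and "trivial_history A m s" and "trivial_history A m t"
  shows "orbit A s \<inter> orbit A t = {}"
proof -
  interpret fast_bumps A m using assms(1,2) by unfold_locales auto
  have "orbit A s \<inter> orbit A t \<subseteq> fast_reach A m s \<inter> fast_reach A m t"
    using orbit_subset_fast_reach assms(3,4,6,7) by blast
  also have "\<dots> = {}"
    using fast_reach_common_point[OF assms(3,6,4,7)] assms(5) by blast
  finally show ?thesis by blast
qed

end
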